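(* Let $0<p<1$ be constant and $G\sim G_{n,p}$, and let $D$ be the set of odd-degree vertices of $G$. Then asymptotically almost surely $G[D]$ has a perfect matching.
   Context: $G_{n,p}$ is the binomial random graph on $n$ vertices with each edge present independently with probability $p$. Asymptotically almost surely means with probability tending to $1$ as $n\to\infty$. *)

theory Defs
  imports Complex_Main
begin

text \<open>Simple graphs on the vertex set {0..<n}: a graph is a set of edges,
  each edge a 2-element set of vertices.\<close>

definition all_edges :: "nat \<Rightarrow> nat set set" where
  "all_edges n = {e. \<exists>u v. u < n \<and> v < n \<and> u \<noteq> v \<and> e = {u, v}}"

text \<open>Probability that G(n,p) satisfies property P: each edge of K_n present
  independently with probability p.\<close>

definition gnp_prob :: "nat \<Rightarrow> real \<Rightarrow> (nat set set \<Rightarrow> bool) \<Rightarrow> real" where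
  "gnp_prob n p P =
     (\<Sum>E\<in>Pow (all_edges n).
        if P E then p ^ card E * (1 - p) ^ (card (all_edges n) - card E) else 0)"

definition degree :: "nat set set \<Rightarrow> nat \<Rightarrow> nat" where
  "degree E v = card {u. {u, v} \<in> E}"

definition odd_vertices :: "nat \<Rightarrow> nat set set \<Rightarrow> nat set" where
  "odd_vertices n E = {v. v < n \<and> odd (degree E v)}"

definition induced_has_perfect_matching :: "nat set set \<Rightarrow> nat set \<Rightarrow> bool" where
  "induced_has_perfect_matching E D =
     (\<exists>M. M \<subseteq> E \<and> (\<forall>e\<in>M. e \<subseteq> D) \<and> (\<forall>v\<in>D. \<exists>!e. e \<in> M \<and> v \<in> e))"

end

theory Submission
  imports Defs "HOL-Real_Asymp.Real_Asymp"
begin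

text \<open>
  Let \<open>D\<close> be the set of odd-degree vertices; \<open>|D|\<close> is even by the handshake lemma, so a
  maximum matching of \<open>G[D]\<close> that is not perfect misses two vertices \<open>u, w \<in> D\<close>.
  Suppose every vertex has at least \<open>4k + 2\<close> neighbours in \<open>D\<close> and any two disjoint
  \<open>k\<close>-sets of vertices are joined by an edge. Then \<open>u\<close> (or \<open>w\<close>) has an unmatched neighbour
  in \<open>D\<close>, or the neighbourhoods of \<open>u\<close> and \<open>w\<close> in \<open>D\<close> each meet at least \<open>2k + 1\<close> matching
  edges. In the latter case the far ends of \<open>k\<close> such edges for \<open>u\<close> and of \<open>k\<close> others for \<open>w\<close>
  are joined by an edge \<open>a b\<close>, giving an augmenting path \<open>u x a b y w\<close>. Either way the
  matching was not maximum.

  Take \<open>k = \<lfloor>n powr (1/4)\<rfloor>\<close>. Two disjoint \<open>k\<close>-sets fail to be joined with probability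
  at most \<open>n ^ (2 k) * (1 - p) ^ (k * k)\<close>. For the degree condition, split the vertices other than \<open>v\<close>
  into pairs \<open>(a\<^sub>i, b\<^sub>i)\<close>. Given all edges except \<open>v a\<^sub>i\<close> and \<open>a\<^sub>i b\<^sub>i\<close>, the vertex \<open>a\<^sub>i\<close> is an
  odd-degree neighbour of \<open>v\<close> with probability at least \<open>p min(p, 1 - p)\<close>, since the edge
  \<open>a\<^sub>i b\<^sub>i\<close> toggles the parity of the degree of \<open>a\<^sub>i\<close> and touches no other pair. Hence each
  of \<open>4k + 2\<close> blocks of about \<open>n / (8k)\<close> pairs contains such an \<open>a\<^sub>i\<close> except with
  exponentially small probability, and both failure probabilities tend to \<open>0\<close>.
\<close>

section \<open>Random subsets of a finite set\<close>

definition subset_weight :: "'a set \<Rightarrow> real \<Rightarrow> 'a set \<Rightarrow> real" where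
  "subset_weight I p E = p ^ card E * (1 - p) ^ (card I - card E)"

definition subset_prob :: "'a set \<Rightarrow> real \<Rightarrow> ('a set \<Rightarrow> bool) \<Rightarrow> real" where
  "subset_prob I p Q = (\<Sum>E\<in>Pow I. if Q E then subset_weight I p E else 0)"

lemma gnp_prob_eq_subset_prob: "gnp_prob n p Q = subset_prob (all_edges n) p Q"
  unfolding gnp_prob_def subset_prob_def subset_weight_def by simp

lemma subset_weight_nonneg: "0 \<le> p \<Longrightarrow> p \<le> 1 \<Longrightarrow> 0 \<le> subset_weight I p E"
  by (simp add: subset_weight_def)

lemma subset_weight_Un:
  assumes "finite I" "F \<subseteq> I" "S \<subseteq> I - F" "T \<subseteq> F"
  shows "subset_weight I p (S \<union> T) = subset_weight (I - F) p S * subset_weight F p T"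
proof -
  have fin: "finite S" "finite T" "finite F"
    using assms by (auto intro: finite_subset)
  have card_Un: "card (S \<union> T) = card S + card T"
    using fin assms(3,4) by (subst card_Un_disjoint) auto
  have "card S \<le> card (I - F)" "card T \<le> card F" "card F \<le> card I"
    using assms fin by (auto intro: card_mono)
  moreover have "card (I - F) = card I - card F"
    using assms by (simp add: card_Diff_subset finite_subset)
  ultimately have "card I - card (S \<union> T) = (card (I - F) - card S) + (card F - card T)"
    unfolding card_Un by linarith
  then show ?thesis
    unfolding subset_weight_def card_Un by (simp add: power_add algebra_simps)
qed

lemma subset_prob_split:
  assumes "finite I" "F \<subseteq> I"
  shows "subset_prob I p Q =
    (\<Sum>S\<in>Pow (I - F). subset_weight (I - F) p S * subset_prob F p (\<lambda>T. Q (S \<union> T)))"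
proof -
  let ?g = "\<lambda>E. if Q E then subset_weight I p E else 0"
  let ?U = "\<lambda>(S, T). S \<union> T"
  have inj: "inj_on ?U (Pow (I - F) \<times> Pow F)"
    by (rule inj_on_inverseI[where g = "\<lambda>E. (E - F, E \<inter> F)"]) auto
  have img: "?U ` (Pow (I - F) \<times> Pow F) = Pow I"
  proof
    show "Pow I \<subseteq> ?U ` (Pow (I - F) \<times> Pow F)"
    proof
      fix E assume "E \<in> Pow I"
      then have "(E - F, E \<inter> F) \<in> Pow (I - F) \<times> Pow F" "E = ?U (E - F, E \<inter> F)" by auto
      then show "E \<in> ?U ` (Pow (I - F) \<times> Pow F)" by blast
    qed
  qed (use assms in auto)
  have "subset_prob I p Q = (\<Sum>x\<in>Pow (I - F) \<times> Pow F. ?g (?U x))"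
    unfolding subset_prob_def by (subst img[symmetric], rule sum.reindex[OF inj, unfolded comp_def])
  also have "\<dots> = (\<Sum>S\<in>Pow (I - F). \<Sum>T\<in>Pow F. ?g (S \<union> T))"
    by (subst sum.cartesian_product) (auto intro!: sum.cong)
  also have "\<dots> = (\<Sum>S\<in>Pow (I - F). subset_weight (I - F) p S * subset_prob F p (\<lambda>T. Q (S \<union> T)))"
    unfolding subset_prob_def sum_distrib_left
    by (intro sum.cong refl) (auto simp: subset_weight_Un[OF assms])
  finally show ?thesis .
qed

lemma subset_prob_True: "finite I \<Longrightarrow> subset_prob I p (\<lambda>_. True) = 1"
proof (induction I rule: finite_induct)
  case empty
  then show ?case by (simp add: subset_prob_def subset_weight_def)
next
  case (insert e I)
  have "subset_prob {e} p (\<lambda>_. True) = 1"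
    by (simp add: subset_prob_def subset_weight_def Pow_insert)
  moreover have "insert e I - {e} = I"
    using insert by auto
  ultimately have "subset_prob (insert e I) p (\<lambda>_. True) = (\<Sum>S\<in>Pow I. subset_weight I p S)"
    using subset_prob_split[of "insert e I" "{e}" p "\<lambda>_. True"] insert by simp
  also have "\<dots> = 1"
    using insert by (simp add: subset_prob_def)
  finally show ?case .
qed

lemma subset_prob_nonneg: "0 \<le> p \<Longrightarrow> p \<le> 1 \<Longrightarrow> 0 \<le> subset_prob I p Q"
  unfolding subset_prob_def by (intro sum_nonneg) (simp add: subset_weight_nonneg)

lemma subset_prob_mono:
  assumes "0 \<le> p" "p \<le> 1" "\<And>E. E \<subseteq> I \<Longrightarrow> Q E \<Longrightarrow> R E"
  shows "subset_prob I p Q \<le> subset_prob I p R"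
  unfolding subset_prob_def using assms by (intro sum_mono) (auto simp: subset_weight_nonneg)

lemma subset_prob_compl:
  assumes "finite I"
  shows "subset_prob I p Q = 1 - subset_prob I p (\<lambda>E. \<not> Q E)"
proof -
  have "subset_prob I p Q + subset_prob I p (\<lambda>E. \<not> Q E) = subset_prob I p (\<lambda>_. True)"
    unfolding subset_prob_def sum.distrib[symmetric] by (intro sum.cong) auto
  then show ?thesis
    using subset_prob_True[OF assms] by simp
qed

lemma subset_prob_le_1: "finite I \<Longrightarrow> 0 \<le> p \<Longrightarrow> p \<le> 1 \<Longrightarrow> subset_prob I p Q \<le> 1"
  using subset_prob_compl[of I p Q] subset_prob_nonneg[of p I "\<lambda>E. \<not> Q E"] by simp

lemma subset_prob_disj_le:
  assumes "0 \<le> p" "p \<le> 1"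
  shows "subset_prob I p (\<lambda>E. Q E \<or> R E) \<le> subset_prob I p Q + subset_prob I p R"
  unfolding subset_prob_def sum.distrib[symmetric]
  using assms by (intro sum_mono) (auto simp: subset_weight_nonneg)

lemma subset_prob_Bex_le_sum:
  assumes "0 \<le> p" "p \<le> 1" "finite J"
  shows "subset_prob I p (\<lambda>E. \<exists>j\<in>J. Q j E) \<le> (\<Sum>j\<in>J. subset_prob I p (Q j))"
proof -
  have "subset_prob I p (\<lambda>E. \<exists>j\<in>J. Q j E)
      \<le> (\<Sum>E\<in>Pow I. \<Sum>j\<in>J. if Q j E then subset_weight I p E else 0)"
    unfolding subset_prob_def
  proof (intro sum_mono)
    fix E
    show "(if \<exists>j\<in>J. Q j E then subset_weight I p E else 0)
        \<le> (\<Sum>j\<in>J. if Q j E then subset_weight I p E else 0)"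
    proof (cases "\<exists>j\<in>J. Q j E")
      case True
      then obtain j where "j \<in> J" "Q j E" by blast
      then show ?thesis
        using member_le_sum[of j J "\<lambda>j. if Q j E then subset_weight I p E else 0"] assms
        by (auto simp: subset_weight_nonneg)
    qed (use assms in \<open>simp add: sum_nonneg subset_weight_nonneg\<close>)
  qed
  also have "\<dots> = (\<Sum>j\<in>J. subset_prob I p (Q j))"
    unfolding subset_prob_def by (rule sum.swap)
  finally show ?thesis .
qed

lemma subset_prob_conj_le:
  assumes "finite I" "F \<subseteq> I" "0 \<le> p" "p \<le> 1" "0 \<le> r"
    and A: "\<And>S T. S \<subseteq> I - F \<Longrightarrow> T \<subseteq> F \<Longrightarrow> A (S \<union> T) = A S"
    and B: "\<And>S. S \<subseteq> I - F \<Longrightarrow> subset_prob F p (\<lambda>T. B (S \<union> T)) \<le> r"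
  shows "subset_prob I p (\<lambda>E. A E \<and> B E) \<le> r * subset_prob I p A"
proof -
  have "subset_prob I p (\<lambda>E. A E \<and> B E) = (\<Sum>S\<in>Pow (I - F).
      subset_weight (I - F) p S * (if A S then subset_prob F p (\<lambda>T. B (S \<union> T)) else 0))"
    unfolding subset_prob_split[OF assms(1,2)]
    using A by (intro sum.cong refl) (auto simp: subset_prob_def intro!: sum.cong)
  also have "\<dots> \<le> (\<Sum>S\<in>Pow (I - F). subset_weight (I - F) p S * (if A S then r else 0))"
    using B assms by (intro sum_mono mult_left_mono) (auto simp: subset_weight_nonneg)
  also have "\<dots> = r * subset_prob I p A"
    unfolding subset_prob_split[OF assms(1,2)] sum_distrib_left
  proof (intro sum.cong refl)
    fix S assume S: "S \<in> Pow (I - F)"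
    have "subset_prob F p (\<lambda>T. A (S \<union> T)) = (if A S then 1 else 0)"
      using A[of S] S subset_prob_True[of F p] finite_subset[OF assms(2,1)]
      by (auto simp: subset_prob_def)
    then show "subset_weight (I - F) p S * (if A S then r else 0)
        = r * (subset_weight (I - F) p S * subset_prob F p (\<lambda>T. A (S \<union> T)))"
      by simp
  qed
  finally show ?thesis .
qed

lemma subset_prob_disjoint_le:
  assumes "finite I" "F \<subseteq> I" "0 \<le> p" "p \<le> 1"
  shows "subset_prob I p (\<lambda>E. E \<inter> F = {}) \<le> (1 - p) ^ card F"
proof -
  have "subset_prob I p (\<lambda>E. True \<and> E \<inter> F = {}) \<le> (1 - p) ^ card F * subset_prob I p (\<lambda>_. True)"
  proof (rule subset_prob_conj_le[OF assms])
    fix S assume S: "S \<subseteq> I - F"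
    have "subset_prob F p (\<lambda>T. (S \<union> T) \<inter> F = {})
        = (\<Sum>T\<in>Pow F. if T = {} then subset_weight F p T else 0)"
      unfolding subset_prob_def using S by (intro sum.cong refl) (auto simp: Int_absorb2)
    also have "\<dots> = (1 - p) ^ card F"
      using finite_subset[OF assms(2,1)] by (simp add: sum.delta subset_weight_def)
    finally show "subset_prob F p (\<lambda>T. (S \<union> T) \<inter> F = {}) \<le> (1 - p) ^ card F" by simp
  qed (use assms in simp_all)
  then show ?thesis
    using subset_prob_True[OF assms(1)] by simp
qed

lemma subset_prob_Ball_le_power:
  assumes "finite I" "finite J" "0 \<le> p" "p \<le> 1" "0 \<le> r"
    and "\<And>j. j \<in> J \<Longrightarrow> F j \<subseteq> I"
    and "\<And>i j S T. i \<in> J \<Longrightarrow> j \<in> J \<Longrightarrow> i \<noteq> j \<Longrightarrow> S \<subseteq> I - F j \<Longrightarrow> T \<subseteq> F j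
      \<Longrightarrow> B i (S \<union> T) = B i S"
    and "\<And>j S. j \<in> J \<Longrightarrow> S \<subseteq> I - F j \<Longrightarrow> subset_prob (F j) p (\<lambda>T. B j (S \<union> T)) \<le> r"
  shows "subset_prob I p (\<lambda>E. \<forall>j\<in>J. B j E) \<le> r ^ card J"
  using assms(2,6-)
proof (induction J rule: finite_induct)
  case empty
  then show ?case using subset_prob_True[OF assms(1)] by simp
next
  case (insert j J)
  have "subset_prob I p (\<lambda>E. \<forall>i\<in>insert j J. B i E) = subset_prob I p (\<lambda>E. (\<forall>i\<in>J. B i E) \<and> B j E)"
    unfolding subset_prob_def by (intro sum.cong refl) auto
  also have "\<dots> \<le> r * subset_prob I p (\<lambda>E. \<forall>i\<in>J. B i E)"
  proof (rule subset_prob_conj_le[OF assms(1) _ assms(3-5)])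
    fix S T assume "S \<subseteq> I - F j" "T \<subseteq> F j"
    then show "(\<forall>i\<in>J. B i (S \<union> T)) = (\<forall>i\<in>J. B i S)"
      using insert.prems(2)[of _ j S T] insert.hyps(2) by auto
  qed (use insert.prems in auto)
  also have "\<dots> \<le> r * r ^ card J"
  proof (intro mult_left_mono insert.IH assms(5))
    show "\<And>i i' S T. i \<in> J \<Longrightarrow> i' \<in> J \<Longrightarrow> i \<noteq> i' \<Longrightarrow> S \<subseteq> I - F i' \<Longrightarrow> T \<subseteq> F i'
        \<Longrightarrow> B i (S \<union> T) = B i S"
      using insert.prems(2) by blast
  qed (use insert.prems in simp_all)
  finally show ?case
    using insert.hyps by simp
qed

lemma subset_prob_doubleton:
  assumes "e1 \<noteq> e2"
  shows "subset_prob {e1, e2} p Q =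
    (if Q {} then (1 - p)^2 else 0) + (if Q {e1} then p * (1 - p) else 0)
    + (if Q {e2} then p * (1 - p) else 0) + (if Q {e1, e2} then p^2 else 0)"
proof -
  have "Pow {e1, e2} = {{}, {e1}, {e2}, {e1, e2}}"
    by (auto simp: Pow_insert)
  then show ?thesis
    unfolding subset_prob_def using assms
    by (simp add: subset_weight_def doubleton_eq_iff insert_commute power2_eq_square)
qed

section \<open>Perfect matchings of \<open>G[D]\<close>\<close>

lemma finite_all_edges: "finite (all_edges n)"
  by (rule finite_subset[of _ "Pow {..<n}"]) (auto simp: all_edges_def)

lemma doubleton_in_all_edges_iff [simp]: "{u, v} \<in> all_edges n \<longleftrightarrow> u < n \<and> v < n \<and> u \<noteq> v"
  by (auto simp: all_edges_def doubleton_eq_iff)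

lemma card_edge: "e \<in> all_edges n \<Longrightarrow> card e = 2"
  by (auto simp: all_edges_def)

lemma even_card_odd_vertices:
  assumes E: "E \<subseteq> all_edges n"
  shows "even (card (odd_vertices n E))"
proof -
  have fE: "finite E"
    using finite_subset[OF E finite_all_edges] .
  let ?P = "{(v, u). {u, v} \<in> E}"
  let ?ends = "\<lambda>e. {(v, u). {u, v} = e}"
  have "?P = (SIGMA v:{..<n}. {u. {u, v} \<in> E})"
    using E by (auto simp: insert_commute)
  moreover have "finite {u. {u, v} \<in> E}" for v
    by (rule finite_subset[of _ "{..<n}"]) (use E in auto)
  ultimately have sum_degree: "(\<Sum>v<n. degree E v) = card ?P"
    by (simp add: degree_def card_SigmaI)
  have card_ends: "card (?ends e) = 2" if "e \<in> E" for e
  proof -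
    have "card e = 2"
      using that E card_edge by blast
    then obtain a b where "a \<noteq> b" "e = {a, b}"
      by (auto simp: card_2_iff)
    then have "?ends e = {(a, b), (b, a)}" "(a, b) \<noteq> (b, a)"
      by (auto simp: doubleton_eq_iff)
    then show ?thesis by simp
  qed
  have "card ?P = card (\<Union>e\<in>E. ?ends e)"
    by (rule arg_cong[where f = card]) auto
  also have "\<dots> = (\<Sum>e\<in>E. card (?ends e))"
    using card_ends by (intro card_UN_disjoint fE) (auto intro: card_ge_0_finite)
  also have "\<dots> = 2 * card E"
    using card_ends by simp
  finally have "even (\<Sum>v<n. degree E v)"
    using sum_degree by simp
  then have "even (card {v\<in>{..<n}. odd (degree E v)})"
    by (simp add: even_sum_iff)
  moreover have "{v\<in>{..<n}. odd (degree E v)} = odd_vertices n E"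
    by (auto simp: odd_vertices_def)
  ultimately show ?thesis by simp
qed

definition matching_in :: "'a set set \<Rightarrow> 'a set \<Rightarrow> 'a set set \<Rightarrow> bool" where
  "matching_in E D M \<longleftrightarrow>
     M \<subseteq> E \<and> (\<forall>e\<in>M. e \<subseteq> D) \<and> (\<forall>e\<in>M. \<forall>e'\<in>M. e \<noteq> e' \<longrightarrow> e \<inter> e' = {})"

definition joined_k_sets :: "nat \<Rightarrow> nat \<Rightarrow> nat set set \<Rightarrow> bool" where
  "joined_k_sets n k E \<longleftrightarrow> (\<forall>A B. A \<subseteq> {..<n} \<longrightarrow> B \<subseteq> {..<n} \<longrightarrow> A \<inter> B = {} \<longrightarrow>
     card A = k \<longrightarrow> card B = k \<longrightarrow> (\<exists>a\<in>A. \<exists>b\<in>B. {a, b} \<in> E))"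

lemma card_le_twice_card_hitting_edges:
  assumes "finite M" "\<And>e. e \<in> M \<Longrightarrow> card e = 2" "X \<subseteq> \<Union>M"
  shows "card X \<le> 2 * card {e\<in>M. e \<inter> X \<noteq> {}}"
proof -
  have "finite e" if "e \<in> M" for e
    using assms(2)[OF that] by (intro card_ge_0_finite) simp
  then have "finite (\<Union>{e\<in>M. e \<inter> X \<noteq> {}})"
    using assms(1) by auto
  moreover have "X \<subseteq> \<Union>{e\<in>M. e \<inter> X \<noteq> {}}"
    using assms(3) by blast
  ultimately have "card X \<le> card (\<Union>{e\<in>M. e \<inter> X \<noteq> {}})"
    by (rule card_mono)
  also have "\<dots> \<le> sum card {e\<in>M. e \<inter> X \<noteq> {}}"
    by (rule card_Union_le_sum_card)
  also have "\<dots> = 2 * card {e\<in>M. e \<inter> X \<noteq> {}}"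
    using assms(2) by simp
  finally show ?thesis .
qed

lemma far_ends_of_edges:
  assumes "finite F" "\<And>e. e \<in> F \<Longrightarrow> card e = 2" "\<And>e. e \<in> F \<Longrightarrow> e \<inter> N \<noteq> {}"
    and disj: "pairwise disjnt F"
  obtains A where "card A = card F" "A \<subseteq> \<Union>F" "\<forall>a\<in>A. \<exists>x\<in>N. x \<noteq> a \<and> {x, a} \<in> F"
proof -
  have "\<forall>e\<in>F. \<exists>xy. fst xy \<in> N \<and> fst xy \<noteq> snd xy \<and> e = {fst xy, snd xy}"
  proof
    fix e assume e: "e \<in> F"
    then obtain x where "x \<in> e" "x \<in> N"
      using assms(3) by blast
    moreover obtain a b where "a \<noteq> b" "e = {a, b}"
      using assms(2)[OF e] by (auto simp: card_2_iff)
    ultimately show "\<exists>xy. fst xy \<in> N \<and> fst xy \<noteq> snd xy \<and> e = {fst xy, snd xy}"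
      by (metis doubleton_eq_iff fst_conv insertE singletonD snd_conv)
  qed
  then obtain g where g: "\<And>e. e \<in> F \<Longrightarrow> fst (g e) \<in> N \<and> fst (g e) \<noteq> snd (g e) \<and> e = {fst (g e), snd (g e)}"
    by metis
  have "inj_on (snd \<circ> g) F"
  proof (rule inj_onI)
    fix e e' assume "e \<in> F" "e' \<in> F" "(snd \<circ> g) e = (snd \<circ> g) e'"
    then have "(snd \<circ> g) e \<in> e \<inter> e'"
      using g by (metis IntI comp_apply insertCI)
    then show "e = e'"
      using pairwiseD(1)[OF disj \<open>e \<in> F\<close> \<open>e' \<in> F\<close>] by (auto simp: disjnt_def)
  qed
  then have "card ((snd \<circ> g) ` F) = card F"
    by (rule card_image)
  moreover have "(snd \<circ> g) ` F \<subseteq> \<Union>F"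
    using g by (auto intro!: UnionI)
  moreover have "\<forall>a\<in>(snd \<circ> g) ` F. \<exists>x\<in>N. x \<noteq> a \<and> {x, a} \<in> F"
    using g by fastforce
  ultimately show thesis
    by (rule that)
qed

lemma augment_by_edge:
  assumes M: "matching_in E D M" "finite M"
    and "u \<in> D" "u \<notin> \<Union>M" "z \<in> D" "z \<notin> \<Union>M" "{u, z} \<in> E"
  shows "\<exists>M'. matching_in E D M' \<and> card M < card M'"
proof (intro exI conjI)
  show "matching_in E D (insert {u, z} M)"
    using assms unfolding matching_in_def by blast
  show "card M < card (insert {u, z} M)"
    using assms by (auto simp: card_insert_if)
qed

lemma augment_along_path:
  assumes M: "matching_in E D M" "finite M"
    and uw: "u \<in> D" "u \<notin> \<Union>M" "w \<in> D" "w \<notin> \<Union>M" "u \<noteq> w"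
    and path: "{x, a} \<in> M" "{y, b} \<in> M" "{x, a} \<noteq> {y, b}" "x \<noteq> a" "y \<noteq> b"
      "{u, x} \<in> E" "{a, b} \<in> E" "{y, w} \<in> E"
  shows "\<exists>M'. matching_in E D M' \<and> card M < card M'"
proof -
  have Mdisj: "\<And>e e'. e \<in> M \<Longrightarrow> e' \<in> M \<Longrightarrow> e \<noteq> e' \<Longrightarrow> e \<inter> e' = {}"
    using M by (auto simp: matching_in_def)
  define old where "old = M - {{x, a}, {y, b}}"
  define new where "new = {{u, x}, {a, b}, {y, w}}"
  have xayb: "{x, a} \<inter> {y, b} = {}"
    using Mdisj path(1-3) .
  have distinct: "distinct [u, x, a, b, y, w]"
    using uw path(1,2,4,5) xayb by auto
  have fresh: "u \<notin> f \<and> x \<notin> f \<and> a \<notin> f \<and> b \<notin> f \<and> y \<notin> f \<and> w \<notin> f" if "f \<in> old" for f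
    using that uw Mdisj[of f "{x, a}"] Mdisj[of f "{y, b}"] path(1,2) by (auto simp: old_def)
  have "matching_in E D (old \<union> new)"
    unfolding matching_in_def
  proof (intro conjI ballI impI)
    show "old \<union> new \<subseteq> E"
      using M path(6-8) by (auto simp: matching_in_def old_def new_def)
    have "x \<in> D" "a \<in> D" "y \<in> D" "b \<in> D"
      using M path(1,2) by (auto simp: matching_in_def)
    then show "e \<subseteq> D" if "e \<in> old \<union> new" for e
      using that M uw by (auto simp: matching_in_def old_def new_def)
    show "e \<inter> e' = {}" if "e \<in> old \<union> new" "e' \<in> old \<union> new" "e \<noteq> e'" for e e'
      using that distinct fresh[of e] fresh[of e'] Mdisj[of e e']
      by (auto simp: old_def new_def)
  qed
  moreover have "card (old \<union> new) = Suc (card M)"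
  proof -
    have "old \<inter> new = {}"
      using fresh by (auto simp: new_def)
    moreover have "finite old" "finite new"
      using M(2) by (simp_all add: old_def new_def)
    ultimately have "card (old \<union> new) = card old + card new"
      by (simp add: card_Un_disjoint)
    moreover have "card new = 3"
      using distinct by (auto simp: new_def doubleton_eq_iff)
    moreover have "card old = card M - 2" "2 \<le> card M"
      using path(1-3) M(2) card_mono[OF M(2), of "{{x, a}, {y, b}}"]
      by (auto simp: old_def card_Diff_subset)
    ultimately show ?thesis
      by simp
  qed
  ultimately show ?thesis
    by (intro exI[of _ "old \<union> new"]) simp
qed

lemma obtain_disjoint_subsets_with_card:
  assumes "k \<le> card S" "2 * k \<le> card T"
  obtains F1 F2 where "F1 \<subseteq> S" "F2 \<subseteq> T" "F1 \<inter> F2 = {}" "card F1 = k" "card F2 = k"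
    "finite F1" "finite F2"
proof -
  obtain F1 where F1: "F1 \<subseteq> S" "card F1 = k" "finite F1"
    using assms(1) by (rule obtain_subset_with_card_n)
  have "card T - card F1 \<le> card (T - F1)"
    by (rule diff_card_le_card_Diff[OF F1(3)])
  then have "k \<le> card (T - F1)"
    using assms(2) F1(2) by simp
  then obtain F2 where F2: "F2 \<subseteq> T - F1" "card F2 = k" "finite F2"
    by (rule obtain_subset_with_card_n)
  show thesis
    using F1 F2 by (intro that[of F1 F2]) auto
qed

lemma augment_matching_via_far_ends:
  assumes E: "E \<subseteq> all_edges n" and M: "matching_in E D M" and D: "D \<subseteq> {..<n}"
    and joined: "joined_k_sets n k E"
    and uw: "u \<in> D" "u \<notin> \<Union>M" "w \<in> D" "w \<notin> \<Union>M" "u \<noteq> w"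
    and hits: "k \<le> card {e\<in>M. e \<inter> X \<noteq> {}}" "2 * k \<le> card {e\<in>M. e \<inter> Y \<noteq> {}}"
    and nbrs: "\<forall>x\<in>X. {u, x} \<in> E" "\<forall>y\<in>Y. {y, w} \<in> E"
  shows "\<exists>M'. matching_in E D M' \<and> card M < card M'"
proof -
  have ME: "M \<subseteq> E" and MD: "\<Union>M \<subseteq> D"
    and Mdisj: "pairwise disjnt M"
    using M by (auto simp: matching_in_def pairwise_def disjnt_def)
  have fM: "finite M"
    by (rule finite_subset[OF _ finite_all_edges[of n]]) (use ME E in blast)
  have card_M: "card e = 2" if "e \<in> M" for e
    using card_edge[of e n] that ME E by blast
  obtain F1 F2 where F: "F1 \<subseteq> {e\<in>M. e \<inter> X \<noteq> {}}" "F2 \<subseteq> {e\<in>M. e \<inter> Y \<noteq> {}}"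
    "F1 \<inter> F2 = {}" "card F1 = k" "card F2 = k" "finite F1" "finite F2"
    using hits by (rule obtain_disjoint_subsets_with_card)
  obtain A where A: "card A = card F1" "A \<subseteq> \<Union>F1" "\<forall>a\<in>A. \<exists>x\<in>X. x \<noteq> a \<and> {x, a} \<in> F1"
  proof (rule far_ends_of_edges[of F1 X])
    show "\<And>e. e \<in> F1 \<Longrightarrow> e \<inter> X \<noteq> {}" "\<And>e. e \<in> F1 \<Longrightarrow> card e = 2"
      using F(1) card_M by blast+
    show "pairwise disjnt F1"
      by (rule pairwise_subset[OF Mdisj]) (use F(1) in blast)
  qed (use F(6) in blast)
  obtain B where B: "card B = card F2" "B \<subseteq> \<Union>F2" "\<forall>b\<in>B. \<exists>y\<in>Y. y \<noteq> b \<and> {y, b} \<in> F2"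
  proof (rule far_ends_of_edges[of F2 Y])
    show "\<And>e. e \<in> F2 \<Longrightarrow> e \<inter> Y \<noteq> {}" "\<And>e. e \<in> F2 \<Longrightarrow> card e = 2"
      using F(2) card_M by blast+
    show "pairwise disjnt F2"
      by (rule pairwise_subset[OF Mdisj]) (use F(2) in blast)
  qed (use F(7) in blast)
  have "disjnt e1 e2" if "e1 \<in> F1" "e2 \<in> F2" for e1 e2
    using that F(1-3) by (intro pairwiseD(1)[OF Mdisj]) auto
  then have "A \<inter> B = {}"
    using A(2) B(2) unfolding disjnt_def by blast
  moreover have "A \<subseteq> {..<n}" "B \<subseteq> {..<n}"
    using A(2) B(2) F(1,2) MD D by blast+
  ultimately have "\<exists>a\<in>A. \<exists>b\<in>B. {a, b} \<in> E"
    using joined A(1) B(1) F(4,5) unfolding joined_k_sets_def by simp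
  then obtain a b x y where ab: "{a, b} \<in> E"
    and xa: "x \<in> X" "x \<noteq> a" "{x, a} \<in> F1" and yb: "y \<in> Y" "y \<noteq> b" "{y, b} \<in> F2"
    using A(3) B(3) by blast
  have "{x, a} \<in> M" "{y, b} \<in> M"
    using F(1,2) xa(3) yb(3) by blast+
  moreover have "{x, a} \<noteq> {y, b}"
    using F(3) xa(3) yb(3) by (metis disjoint_iff)
  ultimately show ?thesis
    using nbrs xa(1) yb(1) by (intro augment_along_path[OF M fM uw _ _ _ xa(2) yb(2) _ ab]) auto
qed

lemma augment_matching:
  assumes E: "E \<subseteq> all_edges n" and M: "matching_in E D M" and D: "D \<subseteq> {..<n}"
    and deg: "\<forall>v<n. 4 * k + 2 \<le> card ({z. {v, z} \<in> E} \<inter> D)"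
    and joined: "joined_k_sets n k E"
    and uw: "u \<in> D" "u \<notin> \<Union>M" "w \<in> D" "w \<notin> \<Union>M" "u \<noteq> w"
  shows "\<exists>M'. matching_in E D M' \<and> card M < card M'"
proof -
  have ME: "M \<subseteq> E"
    using M by (simp add: matching_in_def)
  then have fM: "finite M"
    using finite_subset[OF _ finite_all_edges[of n]] E by blast
  have card_M: "card e = 2" if "e \<in> M" for e
    using card_edge[of e n] that ME E by blast
  define N where "N v = {z. {v, z} \<in> E} \<inter> D" for v
  consider (free_nbr) z where "z \<in> D" "z \<notin> \<Union>M" "{u, z} \<in> E \<or> {w, z} \<in> E"
    | (saturated) "N u \<subseteq> \<Union>M" "N w \<subseteq> \<Union>M"
    unfolding N_def by blast
  then show ?thesis
  proof cases
    case free_nbr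
    then show ?thesis
      using augment_by_edge[OF M fM] uw by blast
  next
    case saturated
    have hits: "2 * k + 1 \<le> card {e\<in>M. e \<inter> N v \<noteq> {}}" if "v \<in> {u, w}" for v
    proof -
      have "4 * k + 2 \<le> card (N v)"
        using deg D uw that by (auto simp: N_def)
      also have "\<dots> \<le> 2 * card {e\<in>M. e \<inter> N v \<noteq> {}}"
        using saturated that by (intro card_le_twice_card_hitting_edges fM card_M) auto
      finally show ?thesis by simp
    qed
    have "\<forall>x\<in>N u. {u, x} \<in> E" "\<forall>y\<in>N w. {y, w} \<in> E"
      by (auto simp: N_def insert_commute)
    then show ?thesis
      using augment_matching_via_far_ends[OF E M D joined uw, of "N u" "N w"] hits[of u] hits[of w]
      by simp
  qed
qed

lemma induced_has_perfect_matching_if_covered: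
  assumes M: "matching_in E D M" and cover: "D \<subseteq> \<Union>M"
  shows "induced_has_perfect_matching E D"
  unfolding induced_has_perfect_matching_def
proof (intro exI[of _ M] conjI ballI)
  show "M \<subseteq> E" "\<And>e. e \<in> M \<Longrightarrow> e \<subseteq> D"
    using M by (simp_all add: matching_in_def)
  fix v assume "v \<in> D"
  then obtain e where e: "e \<in> M" "v \<in> e"
    using cover by blast
  show "\<exists>!e. e \<in> M \<and> v \<in> e"
  proof (rule ex1I[of _ e])
    fix e' assume "e' \<in> M \<and> v \<in> e'"
    then show "e' = e"
      using M e unfolding matching_in_def by blast
  qed (use e in simp)
qed

lemma induced_has_perfect_matching_odd_vertices:
  assumes E: "E \<subseteq> all_edges n"
    and deg: "\<forall>v<n. 4 * k + 2 \<le> card ({z. {v, z} \<in> E} \<inter> odd_vertices n E)"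
    and joined: "joined_k_sets n k E"
  shows "induced_has_perfect_matching E (odd_vertices n E)"
proof -
  define D where "D = odd_vertices n E"
  have D: "D \<subseteq> {..<n}"
    by (auto simp: D_def odd_vertices_def)
  then have fD: "finite D"
    by (rule finite_subset) simp
  have fE: "finite E"
    using finite_subset[OF E finite_all_edges] .
  have "matching_in E D {}"
    by (simp add: matching_in_def)
  moreover have "\<forall>M. matching_in E D M \<longrightarrow> card M < Suc (card E)"
    using fE by (simp add: matching_in_def card_mono less_Suc_eq_le)
  ultimately obtain M where M: "matching_in E D M"
    and max: "\<And>M'. matching_in E D M' \<Longrightarrow> card M' \<le> card M"
    using ex_has_greatest_nat[of "matching_in E D" "{}" card "Suc (card E)"] by blast
  show ?thesis
  proof (cases "D \<subseteq> \<Union>M")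
    case True
    then show ?thesis
      using induced_has_perfect_matching_if_covered[OF M] by (simp add: D_def)
  next
    case False
    then obtain u where u: "u \<in> D - \<Union>M" by blast
    have ME: "M \<subseteq> E" and MD: "\<Union>M \<subseteq> D"
      and Mdisj: "pairwise disjnt M"
      using M by (auto simp: matching_in_def pairwise_def disjnt_def)
    have card_M: "card e = 2" if "e \<in> M" for e
      using card_edge[of e n] that ME E by blast
    have "card (\<Union>M) = sum card M"
      by (rule card_Union_disjoint[OF Mdisj]) (simp add: card_ge_0_finite card_M)
    also have "\<dots> = 2 * card M"
      using card_M by simp
    finally have "card (\<Union>M) = 2 * card M" .
    moreover have "card D = card (\<Union>M) + card (D - \<Union>M)"
      using card_Diff_subset[OF finite_subset[OF MD fD] MD] card_mono[OF fD MD] by simp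
    moreover have "even (card D)"
      unfolding D_def by (rule even_card_odd_vertices[OF E])
    ultimately have "even (card (D - \<Union>M))"
      by simp
    then have "D - \<Union>M \<noteq> {u}"
      by auto
    then obtain w where w: "w \<in> D - \<Union>M" "w \<noteq> u"
      using u by blast
    have "\<forall>v<n. 4 * k + 2 \<le> card ({z. {v, z} \<in> E} \<inter> D)"
      using deg by (simp add: D_def)
    then obtain M' where "matching_in E D M'" "card M < card M'"
      using augment_matching[OF E M D _ joined, of u w] u w by blast
    then show ?thesis
      using max by fastforce
  qed
qed

section \<open>Two failure probabilities in \<open>G(n,p)\<close>\<close>

lemma card_k_subsets_le: "card {A. A \<subseteq> {..<n} \<and> card A = k} \<le> n ^ k"
proof -
  have "card {A. A \<subseteq> {..<n} \<and> card A = k} = n choose k"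
    using n_subsets[of "{..<n}" k] by simp
  also have "\<dots> \<le> n ^ k"
    by (cases "k \<le> n") (simp_all add: binomial_le_pow binomial_eq_0)
  finally show ?thesis .
qed

lemma prob_no_edge_between_le:
  assumes p: "0 \<le> p" "p \<le> 1"
    and AB: "A \<subseteq> {..<n}" "B \<subseteq> {..<n}" "A \<inter> B = {}" "card A = k" "card B = k"
  shows "subset_prob (all_edges n) p (\<lambda>E. \<forall>a\<in>A. \<forall>b\<in>B. {a, b} \<notin> E) \<le> (1 - p) ^ (k * k)"
proof -
  let ?F = "(\<lambda>(a, b). {a, b}) ` (A \<times> B)"
  have "inj_on (\<lambda>(a, b). {a, b}) (A \<times> B)"
    using AB(3) by (auto simp: inj_on_def doubleton_eq_iff)
  moreover have "finite A" "finite B"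
    using AB(1,2) by (auto intro: finite_subset)
  ultimately have card_F: "card ?F = k * k"
    using AB(4,5) by (simp add: card_image card_cartesian_product)
  have F: "?F \<subseteq> all_edges n"
    using AB(1-3) by auto
  have "subset_prob (all_edges n) p (\<lambda>E. \<forall>a\<in>A. \<forall>b\<in>B. {a, b} \<notin> E)
      \<le> subset_prob (all_edges n) p (\<lambda>E. E \<inter> ?F = {})"
    by (rule subset_prob_mono[OF p]) auto
  also have "\<dots> \<le> (1 - p) ^ card ?F"
    by (rule subset_prob_disjoint_le[OF finite_all_edges F p])
  finally show ?thesis
    using card_F by simp
qed

lemma prob_not_joined_k_sets_le:
  assumes p: "0 \<le> p" "p \<le> 1"
  shows "subset_prob (all_edges n) p (\<lambda>E. \<not> joined_k_sets n k E) \<le> real n ^ (2 * k) * (1 - p) ^ (k * k)"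
proof -
  define K where "K = {A. A \<subseteq> {..<n} \<and> card A = k}"
  define pairs where "pairs = {AB \<in> K \<times> K. fst AB \<inter> snd AB = {}}"
  have fK: "finite K"
    unfolding K_def by (rule finite_subset[of _ "Pow {..<n}"]) auto
  have "card pairs \<le> card (K \<times> K)"
    using fK by (intro card_mono) (auto simp: pairs_def)
  also have "\<dots> \<le> n ^ k * n ^ k"
    using card_k_subsets_le[of n k] unfolding K_def card_cartesian_product by (intro mult_mono) auto
  finally have card_pairs: "card pairs \<le> n ^ (2 * k)"
    by (simp add: power_add[symmetric] mult_2)
  have "subset_prob (all_edges n) p (\<lambda>E. \<not> joined_k_sets n k E)
      \<le> subset_prob (all_edges n) p (\<lambda>E. \<exists>AB\<in>pairs. \<forall>a\<in>fst AB. \<forall>b\<in>snd AB. {a, b} \<notin> E)"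
    by (rule subset_prob_mono[OF p]) (auto simp: joined_k_sets_def pairs_def K_def)
  also have "\<dots> \<le> (\<Sum>AB\<in>pairs. subset_prob (all_edges n) p (\<lambda>E. \<forall>a\<in>fst AB. \<forall>b\<in>snd AB. {a, b} \<notin> E))"
    using fK by (intro subset_prob_Bex_le_sum[OF p]) (simp add: pairs_def)
  also have "\<dots> \<le> (\<Sum>AB\<in>pairs. (1 - p) ^ (k * k))"
    by (intro sum_mono prob_no_edge_between_le[OF p]) (auto simp: pairs_def K_def)
  also have "\<dots> \<le> real n ^ (2 * k) * (1 - p) ^ (k * k)"
    using card_pairs p by (simp, intro mult_right_mono) (auto simp flip: of_nat_power)
  finally show ?thesis .
qed

definition nth_other :: "nat \<Rightarrow> nat \<Rightarrow> nat" where
  "nth_other v j = (if j < v then j else Suc j)"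

definition pair_fst :: "nat \<Rightarrow> nat \<Rightarrow> nat" where
  "pair_fst v i = nth_other v (2 * i)"

definition pair_snd :: "nat \<Rightarrow> nat \<Rightarrow> nat" where
  "pair_snd v i = nth_other v (Suc (2 * i))"

definition pair_gadget :: "nat \<Rightarrow> nat \<Rightarrow> nat set set" where
  "pair_gadget v i = {{v, pair_fst v i}, {pair_fst v i, pair_snd v i}}"

definition odd_nbr_event :: "nat \<Rightarrow> nat \<Rightarrow> nat set set \<Rightarrow> bool" where
  "odd_nbr_event v i E \<longleftrightarrow> {v, pair_fst v i} \<in> E \<and> odd (degree E (pair_fst v i))"

lemma nth_other_ne: "nth_other v j \<noteq> v"
  by (simp add: nth_other_def)

lemma nth_other_eq_iff: "nth_other v i = nth_other v j \<longleftrightarrow> i = j"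
  by (auto simp: nth_other_def)

lemma nth_other_less: "j < n - 1 \<Longrightarrow> v < n \<Longrightarrow> nth_other v j < n"
  by (auto simp: nth_other_def)

lemma pair_fst_eq_iff: "pair_fst v i = pair_fst v j \<longleftrightarrow> i = j"
  by (simp add: pair_fst_def nth_other_eq_iff)

lemma pair_fst_ne_pair_snd: "pair_fst v i \<noteq> pair_snd v j"
  by (simp add: pair_fst_def pair_snd_def nth_other_eq_iff) presburger

lemma pair_ne_center: "pair_fst v i \<noteq> v" "pair_snd v i \<noteq> v"
  by (simp_all add: pair_fst_def pair_snd_def nth_other_ne)

lemma pair_less:
  assumes "v < n" "i < (n - 1) div 2"
  shows "pair_fst v i < n" "pair_snd v i < n"
  using assms by (auto simp: pair_fst_def pair_snd_def intro!: nth_other_less)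

lemma pair_gadget_subset: "v < n \<Longrightarrow> i < (n - 1) div 2 \<Longrightarrow> pair_gadget v i \<subseteq> all_edges n"
  using pair_less[of v n i] pair_ne_center[of v i] pair_fst_ne_pair_snd[of v i i] by (auto simp: pair_gadget_def)

lemma odd_nbr_event_Un_other_gadget:
  assumes "v < n" "i < (n - 1) div 2" "i \<noteq> j" "T \<subseteq> pair_gadget v j"
  shows "odd_nbr_event v i (S \<union> T) = odd_nbr_event v i S"
proof -
  have "{u, pair_fst v i} \<notin> pair_gadget v j" for u
    using assms(3) pair_fst_ne_pair_snd[of v i j] pair_less[OF assms(1,2)] pair_ne_center[of v i]
    by (auto simp: pair_gadget_def doubleton_eq_iff pair_fst_eq_iff)
  then have "{u, pair_fst v i} \<in> S \<union> T \<longleftrightarrow> {u, pair_fst v i} \<in> S" for u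
    using assms(4) by auto
  then show ?thesis
    by (simp add: odd_nbr_event_def degree_def)
qed

lemma degree_insert:
  assumes "{c, a} \<notin> S" "c \<noteq> a" "finite {u. {u, a} \<in> S}"
  shows "degree (insert {c, a} S) a = Suc (degree S a)"
proof -
  have "{u. {u, a} \<in> insert {c, a} S} = insert c {u. {u, a} \<in> S}"
    using assms(2) by (auto simp: doubleton_eq_iff)
  then show ?thesis
    using assms by (simp add: degree_def)
qed

lemma gadget_miss_prob_le:
  fixes p :: real
  assumes "0 \<le> p" "p \<le> 1"
  shows "(1 - p)^2 + p * (1 - p) + (if odd d then p * (1 - p) else 0) + (if even d then p^2 else 0)
    \<le> 1 - p * min p (1 - p)"
proof (cases "even d")
  case True
  have "p * min p (1 - p) \<le> p * (1 - p)"
    using assms by (intro mult_left_mono) auto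
  then show ?thesis
    using True by (simp add: power2_eq_square algebra_simps)
next
  case False
  have "p * min p (1 - p) \<le> p * p"
    using assms by (intro mult_left_mono) auto
  then show ?thesis
    using False by (simp add: power2_eq_square algebra_simps)
qed

lemma prob_not_odd_nbr_event_le:
  assumes p: "0 \<le> p" "p \<le> 1" and v: "v < n" and i: "i < (n - 1) div 2"
    and S: "S \<subseteq> all_edges n - pair_gadget v i"
  shows "subset_prob (pair_gadget v i) p (\<lambda>T. \<not> odd_nbr_event v i (S \<union> T)) \<le> 1 - p * min p (1 - p)"
proof -
  define a where "a = pair_fst v i"
  define e1 where "e1 = {v, a}"
  define e2 where "e2 = {pair_snd v i, a}"
  have gadget: "pair_gadget v i = {e1, e2}"
    by (simp add: pair_gadget_def e1_def e2_def a_def insert_commute)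
  have ne: "e1 \<noteq> e2" "v \<noteq> a" "pair_snd v i \<noteq> a"
    using pair_less[OF v i] pair_ne_center[of v i] pair_fst_ne_pair_snd[of v i i]
    by (auto simp: e1_def e2_def a_def doubleton_eq_iff)
  have notin: "e1 \<notin> S" "e2 \<notin> S"
    using S gadget by auto
  have fin: "finite {u. {u, a} \<in> S'}" if "S' \<subseteq> all_edges n" for S'
    by (rule finite_subset[of _ "{..<n}"]) (use that in auto)
  have S_all: "S \<subseteq> all_edges n" "insert e2 S \<subseteq> all_edges n"
    using S gadget pair_gadget_subset[OF v i] by auto
  define d where "d = degree S a"
  have "degree (insert e1 S) a = Suc d" "degree (insert e2 S) a = Suc d"
    unfolding e1_def e2_def d_def using notin ne fin[OF S_all(1)]
    by (auto intro!: degree_insert simp: e1_def e2_def)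
  moreover have "degree (insert e1 (insert e2 S)) a = Suc (Suc d)"
    unfolding e1_def using notin ne fin[OF S_all(2)] \<open>degree (insert e2 S) a = Suc d\<close>
    by (subst degree_insert) (auto simp: e1_def)
  ultimately have "\<not> odd_nbr_event v i S" "odd_nbr_event v i (insert e1 S) \<longleftrightarrow> even d"
    "\<not> odd_nbr_event v i (insert e2 S)" "odd_nbr_event v i (insert e1 (insert e2 S)) \<longleftrightarrow> odd d"
    using notin ne(1) by (simp_all add: odd_nbr_event_def e1_def[symmetric] a_def[symmetric])
  then have
    "subset_prob (pair_gadget v i) p (\<lambda>T. \<not> odd_nbr_event v i (S \<union> T))
      = (1 - p)^2 + p * (1 - p) + (if odd d then p * (1 - p) else 0) + (if even d then p^2 else 0)"
    unfolding gadget subset_prob_doubleton[OF ne(1)] by simp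
  also have "\<dots> \<le> 1 - p * min p (1 - p)"
    using gadget_miss_prob_le[OF p] .
  finally show ?thesis .
qed

lemma prob_no_odd_nbr_event_le:
  assumes p: "0 \<le> p" "p \<le> 1" and v: "v < n" and J: "J \<subseteq> {..<(n - 1) div 2}"
  shows "subset_prob (all_edges n) p (\<lambda>E. \<forall>i\<in>J. \<not> odd_nbr_event v i E)
    \<le> (1 - p * min p (1 - p)) ^ card J"
proof (rule subset_prob_Ball_le_power[OF finite_all_edges _ p])
  show "finite J"
    using finite_subset[OF J] by simp
  have "p * min p (1 - p) \<le> p * 1"
    using p by (intro mult_left_mono) auto
  then show "0 \<le> 1 - p * min p (1 - p)"
    using p by simp
  show "\<And>j. j \<in> J \<Longrightarrow> pair_gadget v j \<subseteq> all_edges n"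
    using J pair_gadget_subset[OF v] by blast
  show "\<And>j S. j \<in> J \<Longrightarrow> S \<subseteq> all_edges n - pair_gadget v j
      \<Longrightarrow> subset_prob (pair_gadget v j) p (\<lambda>T. \<not> odd_nbr_event v j (S \<union> T)) \<le> 1 - p * min p (1 - p)"
    using J prob_not_odd_nbr_event_le[OF p v] by blast
  fix i j S T assume "i \<in> J" "j \<in> J" "i \<noteq> j" "S \<subseteq> all_edges n - pair_gadget v j" "T \<subseteq> pair_gadget v j"
  then show "(\<not> odd_nbr_event v i (S \<union> T)) = (\<not> odd_nbr_event v i S)"
    using J odd_nbr_event_Un_other_gadget[OF v, of i j T S] by auto
qed

lemma few_odd_nbrs_imp_block_without_event:
  assumes v: "v < n" and blocks: "m * L \<le> (n - 1) div 2"
    and few: "card ({z. {v, z} \<in> E} \<inter> odd_vertices n E) < m"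
  shows "\<exists>t<m. \<forall>i\<in>{t * L..<t * L + L}. \<not> odd_nbr_event v i E"
proof (rule ccontr)
  assume "\<not> ?thesis"
  then have "\<forall>t\<in>{..<m}. \<exists>i. i \<in> {t * L..<t * L + L} \<and> odd_nbr_event v i E"
    by blast
  then obtain f where f: "\<And>t. t < m \<Longrightarrow> f t \<in> {t * L..<t * L + L} \<and> odd_nbr_event v (f t) E"
    using bchoice[of "{..<m}"] by (metis lessThan_iff)
  have f_less: "f t < (n - 1) div 2" if "t < m" for t
  proof -
    have "Suc t * L \<le> m * L"
      using that by (intro mult_right_mono) auto
    then show ?thesis
      using f[OF that] blocks by simp
  qed
  have f_div: "f t div L = t" if "t < m" for t
    using f[OF that] by (intro div_nat_eqI) (auto simp: algebra_simps)
  have "inj_on (\<lambda>t. pair_fst v (f t)) {..<m}"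
  proof (rule inj_onI)
    fix t t' assume "t \<in> {..<m}" "t' \<in> {..<m}" "pair_fst v (f t) = pair_fst v (f t')"
    then show "t = t'"
      using f_div by (metis lessThan_iff pair_fst_eq_iff)
  qed
  then have "m = card ((\<lambda>t. pair_fst v (f t)) ` {..<m})"
    by (simp add: card_image)
  also have "\<dots> \<le> card ({z. {v, z} \<in> E} \<inter> odd_vertices n E)"
  proof (rule card_mono)
    show "finite ({z. {v, z} \<in> E} \<inter> odd_vertices n E)"
      by (rule finite_subset[of _ "{..<n}"]) (auto simp: odd_vertices_def)
    show "(\<lambda>t. pair_fst v (f t)) ` {..<m} \<subseteq> {z. {v, z} \<in> E} \<inter> odd_vertices n E"
      using f f_less pair_less(1)[OF v] by (auto simp: odd_nbr_event_def odd_vertices_def)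
  qed
  finally show False
    using few by simp
qed

lemma prob_few_odd_nbrs_le:
  assumes p: "0 \<le> p" "p \<le> 1" and blocks: "m * L \<le> (n - 1) div 2"
  shows "subset_prob (all_edges n) p (\<lambda>E. \<exists>v<n. card ({z. {v, z} \<in> E} \<inter> odd_vertices n E) < m)
    \<le> real n * real m * (1 - p * min p (1 - p)) ^ L"
proof -
  let ?block = "\<lambda>t. {t * L..<t * L + L}"
  let ?no_event = "\<lambda>vt E. \<forall>i\<in>?block (snd vt). \<not> odd_nbr_event (fst vt) i E"
  have "subset_prob (all_edges n) p (\<lambda>E. \<exists>v<n. card ({z. {v, z} \<in> E} \<inter> odd_vertices n E) < m)
     \<le> subset_prob (all_edges n) p (\<lambda>E. \<exists>vt\<in>{..<n} \<times> {..<m}. ?no_event vt E)"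
  proof (rule subset_prob_mono[OF p])
    fix E assume "\<exists>v<n. card ({z. {v, z} \<in> E} \<inter> odd_vertices n E) < m"
    then obtain v where v: "v < n" "card ({z. {v, z} \<in> E} \<inter> odd_vertices n E) < m"
      by blast
    then obtain t where "t < m" "\<forall>i\<in>?block t. \<not> odd_nbr_event v i E"
      using few_odd_nbrs_imp_block_without_event[OF v(1) blocks v(2)] by blast
    then show "\<exists>vt\<in>{..<n} \<times> {..<m}. ?no_event vt E"
      using v(1) by (intro bexI[of _ "(v, t)"]) auto
  qed
  also have "\<dots> \<le> (\<Sum>vt\<in>{..<n} \<times> {..<m}. subset_prob (all_edges n) p (?no_event vt))"
    by (rule subset_prob_Bex_le_sum[OF p]) simp
  also have "\<dots> \<le> (\<Sum>vt\<in>{..<n} \<times> {..<m}. (1 - p * min p (1 - p)) ^ L)"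
  proof (rule sum_mono)
    fix vt assume vt: "vt \<in> {..<n} \<times> {..<m}"
    have "Suc (snd vt) * L \<le> m * L"
      using vt by (intro mult_right_mono) auto
    then have "?block (snd vt) \<subseteq> {..<(n - 1) div 2}"
      using blocks by auto
    then show "subset_prob (all_edges n) p (?no_event vt) \<le> (1 - p * min p (1 - p)) ^ L"
      using prob_no_odd_nbr_event_le[OF p, of "fst vt" n "?block (snd vt)"] vt by auto
  qed
  also have "\<dots> = real n * real m * (1 - p * min p (1 - p)) ^ L"
    by simp
  finally show ?thesis .
qed

lemma prob_perfect_matching_odd_vertices_ge:
  assumes p: "0 \<le> p" "p \<le> 1" and blocks: "(4 * k + 2) * L \<le> (n - 1) div 2"
  shows "1 - real n * real (4 * k + 2) * (1 - p * min p (1 - p)) ^ L - real n ^ (2 * k) * (1 - p) ^ (k * k)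
    \<le> gnp_prob n p (\<lambda>E. induced_has_perfect_matching E (odd_vertices n E))"
proof -
  let ?few = "\<lambda>E. \<exists>v<n. card ({z. {v, z} \<in> E} \<inter> odd_vertices n E) < 4 * k + 2"
  let ?P = "subset_prob (all_edges n) p"
  have "1 - ?P ?few - ?P (\<lambda>E. \<not> joined_k_sets n k E) \<le> 1 - ?P (\<lambda>E. ?few E \<or> \<not> joined_k_sets n k E)"
    using subset_prob_disj_le[OF p, of "all_edges n" ?few "\<lambda>E. \<not> joined_k_sets n k E"] by simp
  also have "\<dots> = ?P (\<lambda>E. \<not> (?few E \<or> \<not> joined_k_sets n k E))"
    using subset_prob_compl[OF finite_all_edges, of n p "\<lambda>E. ?few E \<or> \<not> joined_k_sets n k E"]
    by linarith
  also have "\<dots> \<le> ?P (\<lambda>E. induced_has_perfect_matching E (odd_vertices n E))"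
  proof (rule subset_prob_mono[OF p])
    fix E assume "E \<subseteq> all_edges n" "\<not> (?few E \<or> \<not> joined_k_sets n k E)"
    then have "\<forall>v<n. 4 * k + 2 \<le> card ({z. {v, z} \<in> E} \<inter> odd_vertices n E)" "joined_k_sets n k E"
      using not_less by blast+
    then show "induced_has_perfect_matching E (odd_vertices n E)"
      using \<open>E \<subseteq> all_edges n\<close> induced_has_perfect_matching_odd_vertices by blast
  qed
  finally show ?thesis
    using prob_few_odd_nbrs_le[OF p blocks] prob_not_joined_k_sets_le[OF p, of n k]
    by (simp add: gnp_prob_eq_subset_prob)
qed

section \<open>Asymptotics\<close>

definition root4_floor :: "nat \<Rightarrow> nat" where
  "root4_floor n = nat \<lfloor>real n powr (1/4)\<rfloor>"

lemma root4_floor_bounds: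
  "real (root4_floor n) \<le> real n powr (1/4)" "real n powr (1/4) - 1 \<le> real (root4_floor n)"
proof -
  have "real (root4_floor n) = of_int \<lfloor>real n powr (1/4)\<rfloor>"
    by (simp add: root4_floor_def)
  then show "real (root4_floor n) \<le> real n powr (1/4)" "real n powr (1/4) - 1 \<le> real (root4_floor n)"
    using of_int_floor_le[of "real n powr (1/4)"] real_of_int_floor_gt_diff_one[of "real n powr (1/4)"]
    by simp_all
qed

lemma power_eq_exp_ln: "0 < r \<Longrightarrow> r ^ m = exp (real m * ln r)"
  by (simp add: powr_def flip: powr_realpow)

lemma real_of_nat_div_ge: "0 < b \<Longrightarrow> real a / real b - 1 \<le> real (a div b)"
proof -
  assume "0 < b"
  have "a < a div b * b + b"
    using div_mult_mod_eq[of a b] mod_less_divisor[OF \<open>0 < b\<close>, of a] by linarith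
  then have "real a < real (a div b * b + b)"
    by (simp only: of_nat_less_iff)
  then show ?thesis
    using \<open>0 < b\<close> by (simp add: field_simps)
qed

lemma real_half_div_ge:
  assumes "0 < m"
  shows "((real n - 2) / 2) / real m - 1 \<le> real ((n - 1) div 2 div m)"
proof -
  have "n \<le> 2 * ((n - 1) div 2) + 2"
    by presburger
  then have "real n \<le> real (2 * ((n - 1) div 2) + 2)"
    by (simp only: of_nat_le_iff)
  then have "((real n - 2) / 2) / real m \<le> real ((n - 1) div 2) / real m"
    by (intro divide_right_mono) auto
  then show ?thesis
    using real_of_nat_div_ge[OF assms, of "(n - 1) div 2"] by linarith
qed

lemma odd_nbr_error_tendsto_0:
  assumes "0 < q" "q < 1"
  shows "(\<lambda>n. real n * real (4 * root4_floor n + 2)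
            * (1 - q) ^ ((n - 1) div 2 div (4 * root4_floor n + 2))) \<longlonglongrightarrow> 0"
proof (rule tendsto_sandwich[OF _ _ tendsto_const])
  define c where "c = - ln (1 - q)"
  have c: "0 < c"
    using assms by (simp add: c_def)
  let ?x = "\<lambda>n::nat. real n powr (1/4)"
  let ?y = "\<lambda>n::nat. ((real n - 2) / 2) / (4 * ?x n + 2) - 1"
  show "(\<lambda>n. real n * (4 * ?x n + 2) * exp (- c * ?y n)) \<longlonglongrightarrow> 0"
    using c by real_asymp
  show "\<forall>\<^sub>F n in sequentially. 0 \<le> real n * real (4 * root4_floor n + 2)
            * (1 - q) ^ ((n - 1) div 2 div (4 * root4_floor n + 2))"
    using assms by simp
  show "\<forall>\<^sub>F n in sequentially. real n * real (4 * root4_floor n + 2)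
            * (1 - q) ^ ((n - 1) div 2 div (4 * root4_floor n + 2))
          \<le> real n * (4 * ?x n + 2) * exp (- c * ?y n)"
    using eventually_ge_at_top[of 2]
  proof eventually_elim
    case (elim n)
    define m where "m = 4 * root4_floor n + 2"
    have m: "0 < real m" "real m \<le> 4 * ?x n + 2"
      using root4_floor_bounds(1)[of n] by (simp_all add: m_def)
    have "?y n \<le> ((real n - 2) / 2) / real m - 1"
      using m elim by (intro diff_right_mono divide_left_mono) auto
    also have "\<dots> \<le> real ((n - 1) div 2 div m)"
      by (rule real_half_div_ge) (simp add: m_def)
    finally have "- c * real ((n - 1) div 2 div m) \<le> - c * ?y n"
      using c by simp
    then have "(1 - q) ^ ((n - 1) div 2 div m) \<le> exp (- c * ?y n)"
      using assms by (simp add: power_eq_exp_ln c_def mult.commute)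
    then show ?case
      unfolding m_def[symmetric] using m assms by (intro mult_mono) auto
  qed
qed

lemma joined_error_tendsto_0:
  assumes "0 < p" "p < 1"
  shows "(\<lambda>n. real n ^ (2 * root4_floor n) * (1 - p) ^ (root4_floor n * root4_floor n)) \<longlonglongrightarrow> 0"
proof (rule tendsto_sandwich[OF _ _ tendsto_const])
  define c where "c = - ln (1 - p)"
  have c: "0 < c"
    using assms by (simp add: c_def)
  let ?x = "\<lambda>n::nat. real n powr (1/4)"
  show "(\<lambda>n. exp (2 * ?x n * ln (real n)) * exp (- c * (?x n - 1)^2)) \<longlonglongrightarrow> 0"
    using c by real_asymp
  show "\<forall>\<^sub>F n in sequentially. 0 \<le> real n ^ (2 * root4_floor n) * (1 - p) ^ (root4_floor n * root4_floor n)"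
    using assms by simp
  show "\<forall>\<^sub>F n in sequentially. real n ^ (2 * root4_floor n) * (1 - p) ^ (root4_floor n * root4_floor n)
          \<le> exp (2 * ?x n * ln (real n)) * exp (- c * (?x n - 1)^2)"
    using eventually_ge_at_top[of 2]
  proof eventually_elim
    case (elim n)
    define k where "k = root4_floor n"
    have "1 \<le> ?x n"
      using elim by (simp add: ge_one_powr_ge_zero)
    then have "(?x n - 1)^2 \<le> real (k * k)"
      using root4_floor_bounds[of n] by (simp add: k_def power2_eq_square mult_mono)
    then have "(1 - p) ^ (k * k) \<le> exp (- c * (?x n - 1)^2)"
      using assms c by (simp add: power_eq_exp_ln c_def mult.commute mult_left_mono_neg)
    moreover have "real n ^ (2 * k) \<le> exp (2 * ?x n * ln (real n))"
      using elim root4_floor_bounds(1)[of n] by (simp add: power_eq_exp_ln k_def mult_right_mono)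
    ultimately show ?case
      unfolding k_def[symmetric] using assms by (intro mult_mono) auto
  qed
qed

theorem lemma3p6:
  fixes p :: real
  assumes "0 < p" and "p < 1"
  shows "(\<lambda>n. gnp_prob n p (\<lambda>E. induced_has_perfect_matching E (odd_vertices n E)))
           \<longlonglongrightarrow> 1"
proof (rule tendsto_sandwich[OF _ _ _ tendsto_const])
  define q where "q = p * min p (1 - p)"
  have "q \<le> p"
    using assms by (simp add: q_def mult_left_le)
  then have q: "0 < q" "q < 1"
    using assms by (simp add: q_def, linarith)
  let ?k = "root4_floor"
  let ?L = "\<lambda>n. (n - 1) div 2 div (4 * ?k n + 2)"
  let ?err = "\<lambda>n. real n * real (4 * ?k n + 2) * (1 - q) ^ ?L n
                  + real n ^ (2 * ?k n) * (1 - p) ^ (?k n * ?k n)"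
  have "1 - ?err n \<le> gnp_prob n p (\<lambda>E. induced_has_perfect_matching E (odd_vertices n E))" for n
  proof -
    have "(4 * ?k n + 2) * ?L n \<le> (n - 1) div 2"
      by (metis div_times_less_eq_dividend mult.commute)
    moreover have "0 \<le> p" "p \<le> 1"
      using assms by simp_all
    ultimately show ?thesis
      using prob_perfect_matching_odd_vertices_ge[of p "?k n" "?L n" n] unfolding q_def by linarith
  qed
  then show "\<forall>\<^sub>F n in sequentially. 1 - ?err n
      \<le> gnp_prob n p (\<lambda>E. induced_has_perfect_matching E (odd_vertices n E))"
    by simp
  show "\<forall>\<^sub>F n in sequentially. gnp_prob n p (\<lambda>E. induced_has_perfect_matching E (odd_vertices n E)) \<le> 1"
    using assms by (simp add: gnp_prob_eq_subset_prob subset_prob_le_1 finite_all_edges)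
  show "(\<lambda>n. 1 - ?err n) \<longlonglongrightarrow> 1"
    using tendsto_diff[OF tendsto_const tendsto_add[OF odd_nbr_error_tendsto_0[OF q] joined_error_tendsto_0[OF assms]]]
    by simp
qed

end
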